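(* Let $(L,\preceq)$ be a lattice with meet $\wedge$ and join $\vee$, and let $\delta$ be an equivalence relation on $L$. Then $\delta$ is a local congruence on $L$ if and only if, for all $a,b,c\in L$: whenever $(a,b)\in\delta$ and $a\wedge b\preceq c\preceq a\vee b$, we have $(a\vee c,\,b\vee c)\in\delta$ and $(a\wedge c,\,b\wedge c)\in\delta$.
   Context: Given a lattice $(L,\preceq)$, an equivalence relation $\delta$ on $L$ is called a local congruence if (i) each equivalence class of $\delta$ is a sublattice of $L$ (closed under $\wedge$ and $\vee$ of $L$), and (ii) each equivalence class of $\delta$ is convex (if $x,y$ belong to the class and $x\preceq z\preceq y$ with $z\in L$, then $z$ belongs to the class). *)

theory Defs
  imports Main
begin

definition local_congruence :: "('a::lattice) rel \<Rightarrow> bool" where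
  "local_congruence \<delta> \<longleftrightarrow>
     equiv UNIV \<delta> \<and>
     (\<forall>X \<in> UNIV // \<delta>.
        (\<forall>x\<in>X. \<forall>y\<in>X. inf x y \<in> X \<and> sup x y \<in> X) \<and>
        (\<forall>x\<in>X. \<forall>y\<in>X. \<forall>z. x \<le> z \<and> z \<le> y \<longrightarrow> z \<in> X))"

end

theory Submission
  imports Defs
begin

text \<open>For \<open>(a, b) \<in> \<delta>\<close> the class of \<open>a\<close> contains \<open>a \<sqinter> b\<close> and \<open>a \<squnion> b\<close>, hence by convexity
the whole interval between them; for \<open>a \<sqinter> b \<le> c \<le> a \<squnion> b\<close> this interval contains
\<open>a \<squnion> c\<close>, \<open>b \<squnion> c\<close>, \<open>a \<sqinter> c\<close> and \<open>b \<sqinter> c\<close>. Conversely, \<open>c = a\<close> relates \<open>a\<close> to \<open>a \<sqinter> b\<close> and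
\<open>a \<squnion> b\<close>, while for \<open>a \<le> c \<le> b\<close> the joins with \<open>c\<close> are \<open>c\<close> and \<open>b\<close>, which gives convexity.\<close>

lemma local_congruence_iff_classes:
  fixes \<delta> :: "('a::lattice) rel"
  assumes "equiv UNIV \<delta>"
  shows "local_congruence \<delta> \<longleftrightarrow>
    (\<forall>a x y. (a, x) \<in> \<delta> \<and> (a, y) \<in> \<delta> \<longrightarrow>
       (a, inf x y) \<in> \<delta> \<and> (a, sup x y) \<in> \<delta> \<and> (\<forall>z. x \<le> z \<and> z \<le> y \<longrightarrow> (a, z) \<in> \<delta>))"
proof -
  have "local_congruence \<delta> \<longleftrightarrow> (\<forall>a.
     (\<forall>x\<in>\<delta>``{a}. \<forall>y\<in>\<delta>``{a}. inf x y \<in> \<delta>``{a} \<and> sup x y \<in> \<delta>``{a}) \<and>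
     (\<forall>x\<in>\<delta>``{a}. \<forall>y\<in>\<delta>``{a}. \<forall>z. x \<le> z \<and> z \<le> y \<longrightarrow> z \<in> \<delta>``{a}))"
    using assms by (simp add: local_congruence_def quotient_def)
  then show ?thesis by (simp add: Ball_def) blast
qed

lemma local_congruence_iff:
  fixes \<delta> :: "('a::lattice) rel"
  assumes "equiv UNIV \<delta>"
  shows "local_congruence \<delta> \<longleftrightarrow>
    (\<forall>x y. (x, y) \<in> \<delta> \<longrightarrow> (x, inf x y) \<in> \<delta> \<and> (x, sup x y) \<in> \<delta>) \<and>
    (\<forall>x y z. (x, y) \<in> \<delta> \<and> x \<le> z \<and> z \<le> y \<longrightarrow> (x, z) \<in> \<delta>)"
  (is "_ \<longleftrightarrow> ?lattice \<and> ?convex")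
  unfolding local_congruence_iff_classes[OF assms]
proof
  assume classes: "\<forall>a x y. (a, x) \<in> \<delta> \<and> (a, y) \<in> \<delta> \<longrightarrow>
    (a, inf x y) \<in> \<delta> \<and> (a, sup x y) \<in> \<delta> \<and> (\<forall>z. x \<le> z \<and> z \<le> y \<longrightarrow> (a, z) \<in> \<delta>)"
  from assms have refl: "(x, x) \<in> \<delta>" for x by (auto elim: equivE dest: refl_onD)
  have "(x, inf x y) \<in> \<delta> \<and> (x, sup x y) \<in> \<delta> \<and> (\<forall>z. x \<le> z \<and> z \<le> y \<longrightarrow> (x, z) \<in> \<delta>)"
    if "(x, y) \<in> \<delta>" for x y
    using classes[rule_format, of x x y] refl that by simp
  then show "?lattice \<and> ?convex" by blast
next
  assume "?lattice \<and> ?convex"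
  then have lattice: ?lattice and convex: ?convex by blast+
  from assms have sym: "sym \<delta>" and trans: "trans \<delta>" by (auto elim: equivE)
  show "\<forall>a x y. (a, x) \<in> \<delta> \<and> (a, y) \<in> \<delta> \<longrightarrow>
    (a, inf x y) \<in> \<delta> \<and> (a, sup x y) \<in> \<delta> \<and> (\<forall>z. x \<le> z \<and> z \<le> y \<longrightarrow> (a, z) \<in> \<delta>)"
  proof (intro allI impI, elim conjE)
    fix a x y assume ax: "(a, x) \<in> \<delta>" and ay: "(a, y) \<in> \<delta>"
    have xy: "(x, y) \<in> \<delta>" using transD[OF trans symD[OF sym ax] ay] .
    have "(x, inf x y) \<in> \<delta>" "(x, sup x y) \<in> \<delta>" "\<forall>z. x \<le> z \<and> z \<le> y \<longrightarrow> (x, z) \<in> \<delta>"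
      using lattice convex xy by blast+
    then show "(a, inf x y) \<in> \<delta> \<and> (a, sup x y) \<in> \<delta> \<and> (\<forall>z. x \<le> z \<and> z \<le> y \<longrightarrow> (a, z) \<in> \<delta>)"
      using transD[OF trans ax] by simp
  qed
qed

lemma local_congruence_interval:
  fixes \<delta> :: "('a::lattice) rel"
  assumes "equiv UNIV \<delta>" "local_congruence \<delta>"
    and "(a, b) \<in> \<delta>" "inf a b \<le> u" "u \<le> sup a b"
  shows "(a, u) \<in> \<delta>"
proof -
  note classes = assms(2)[unfolded local_congruence_iff_classes[OF assms(1)], rule_format]
  from assms(1) have "(a, a) \<in> \<delta>" by (auto elim: equivE dest: refl_onD)
  then have "(a, inf a b) \<in> \<delta>" "(a, sup a b) \<in> \<delta>"
    using classes[of a a b] assms(3) by simp_all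
  then show ?thesis
    using classes[of a "inf a b" "sup a b"] assms(4,5) by simp
qed

lemma local_congruence_compatible:
  fixes \<delta> :: "('a::lattice) rel"
  assumes "equiv UNIV \<delta>" "local_congruence \<delta>"
    and ab: "(a, b) \<in> \<delta>" and c: "inf a b \<le> c" "c \<le> sup a b"
  shows "(sup a c, sup b c) \<in> \<delta> \<and> (inf a c, inf b c) \<in> \<delta>"
proof -
  from assms(1) have sym: "sym \<delta>" and trans: "trans \<delta>" by (auto elim: equivE)
  note interval = local_congruence_interval[OF assms(1,2) ab]
  have "(a, sup a c) \<in> \<delta>"
    using interval le_supI1[OF inf.cobounded1] le_supI[OF sup.cobounded1 c(2)] .
  moreover have "(a, sup b c) \<in> \<delta>"
    using interval le_supI1[OF inf.cobounded2] le_supI[OF sup.cobounded2 c(2)] .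
  moreover have "(a, inf a c) \<in> \<delta>"
    using interval le_infI[OF inf.cobounded1 c(1)] le_supI1[OF inf.cobounded1] .
  moreover have "(a, inf b c) \<in> \<delta>"
    using interval le_infI[OF inf.cobounded2 c(1)] le_supI2[OF inf.cobounded1] .
  ultimately show ?thesis
    using sym trans by (blast dest: symD intro: transD)
qed

lemma local_congruenceI_compatible:
  fixes \<delta> :: "('a::lattice) rel"
  assumes "equiv UNIV \<delta>"
    and compat: "\<And>a b c. (a, b) \<in> \<delta> \<Longrightarrow> inf a b \<le> c \<Longrightarrow> c \<le> sup a b \<Longrightarrow>
        (sup a c, sup b c) \<in> \<delta> \<and> (inf a c, inf b c) \<in> \<delta>"
  shows "local_congruence \<delta>"
proof -
  from assms(1) have sym: "sym \<delta>" and trans: "trans \<delta>" by (auto elim: equivE)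
  have "(x, inf x y) \<in> \<delta> \<and> (x, sup x y) \<in> \<delta>" if "(x, y) \<in> \<delta>" for x y
    using compat[of x y x] that by (simp add: inf.commute sup.commute)
  moreover have "(x, z) \<in> \<delta>" if xy: "(x, y) \<in> \<delta>" and z: "x \<le> z" "z \<le> y" for x y z
  proof -
    have "x \<le> y" using z by (rule order.trans)
    then have "(sup x z, sup y z) \<in> \<delta>"
      using compat[of x y z] xy z by (simp add: inf_absorb1 sup_absorb2)
    then have "(z, y) \<in> \<delta>" using z by (simp add: sup_absorb1 sup_absorb2)
    then show ?thesis using xy sym trans by (blast dest: symD intro: transD)
  qed
  ultimately show ?thesis
    using local_congruence_iff[OF assms(1)] by blast
qed

theorem proposition3p5:
  fixes \<delta> :: "('a::lattice) rel"
  assumes "equiv UNIV \<delta>"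
  shows "local_congruence \<delta> \<longleftrightarrow>
    (\<forall>a b c. (a, b) \<in> \<delta> \<and> inf a b \<le> c \<and> c \<le> sup a b \<longrightarrow>
        (sup a c, sup b c) \<in> \<delta> \<and> (inf a c, inf b c) \<in> \<delta>)"
  using local_congruence_compatible[OF assms] local_congruenceI_compatible[OF assms] by blast

end
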